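(* The two morphisms \[\mathbb{P}^1\times\mathbb{P}^1 \to \mathbb{P}^3,\quad [x_0:x_1]\times[y_0:y_1] \mapsto [x_0y_0^2 : x_1y_0^2 + 2x_0y_0y_1 : 2x_1y_0y_1 + x_0y_1^2 : x_1y_1^2],\] and \[\mathbb{P}^2\times\mathbb{P}^2 \to \mathbb{P}^8,\quad [x_0:x_1:x_2]\times[y_0:y_1:y_2] \mapsto [x_0y_0^2 : x_1y_1^2 : x_2y_2^2 : x_0y_1^2 + 2x_1y_0y_1 : x_1y_2^2 + 2x_2y_1y_2 : x_2y_0^2 + 2x_0y_0y_2 : 2x_0y_1y_2 + 2x_1y_0y_2 + 2x_2y_0y_1 : x_1y_0^2 - x_2y_1^2 + 2x_0y_0y_1 - 2x_1y_1y_2 : x_1y_0^2 - x_0y_2^2 + 2x_0y_0y_1 - 2x_2y_0y_2]\] are injective. In particular, $\operatorname{injdim}(\mathbb{P}^1\times\mathbb{P}^1,\mathcal{O}(1,2)) = 3$ and $\operatorname{injdim}(\mathbb{P}^2\times\mathbb{P}^2,\mathcal{O}(1,2)) \leq 8$.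
   Context: Over $\mathbb{C}$. For a line bundle $\mathscr{L}$ on a projective variety $X$ and a nonzero subspace $V \subseteq H^0(X,\mathscr{L})$, $\varphi_V \colon X \dashrightarrow \mathbb{P}(V^* )$ is the rational map given by the sections in $V$; $\operatorname{injdim}(X,\mathscr{L}) := \inf\{\dim V - 1 : \varphi_V \text{ is an injective morphism}\}$. *)

theory Defs
  imports Complex_Main
begin

text \<open>Homogeneous coordinates of points of P^n: vectors nat => complex supported on {0..n}.\<close>
definition cvec :: "nat \<Rightarrow> (nat \<Rightarrow> complex) set" where
  "cvec n = {x. (\<forall>i>n. x i = 0) \<and> x \<noteq> (\<lambda>_. 0)}"

definition proj_eq :: "(nat \<Rightarrow> complex) \<Rightarrow> (nat \<Rightarrow> complex) \<Rightarrow> bool" where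
  "proj_eq x x' \<longleftrightarrow> (\<exists>c. c \<noteq> 0 \<and> x' = (\<lambda>i. c * x i))"

text \<open>A global section of O(1,2) on P^n x P^n: a bihomogeneous form of bidegree (1,2)
  (linear in x, quadratic in y), viewed as a polynomial function.\<close>
definition form12 :: "nat \<Rightarrow> ((nat \<Rightarrow> complex) \<Rightarrow> (nat \<Rightarrow> complex) \<Rightarrow> complex) \<Rightarrow> bool" where
  "form12 n f \<longleftrightarrow> (\<exists>c. \<forall>x y. f x y =
      (\<Sum>i\<le>n. \<Sum>j\<le>n. \<Sum>k\<le>n. c i j k * x i * y j * y k))"

text \<open>The forms F 0, ..., F d define an injective morphism P^n x P^n -> P^d:
  no common zero (so the map is a morphism) and injective on projective points.\<close>
definition inj_morphism ::
  "nat \<Rightarrow> nat \<Rightarrow> (nat \<Rightarrow> (nat \<Rightarrow> complex) \<Rightarrow> (nat \<Rightarrow> complex) \<Rightarrow> complex) \<Rightarrow> bool" where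
  "inj_morphism n d F \<longleftrightarrow>
     (\<forall>x\<in>cvec n. \<forall>y\<in>cvec n. \<exists>i\<le>d. F i x y \<noteq> 0) \<and>
     (\<forall>x\<in>cvec n. \<forall>y\<in>cvec n. \<forall>x'\<in>cvec n. \<forall>y'\<in>cvec n.
        (\<exists>c. c \<noteq> 0 \<and> (\<forall>i\<le>d. F i x' y' = c * F i x y)) \<longrightarrow> proj_eq x x' \<and> proj_eq y y')"

definition lin_indep_forms ::
  "nat \<Rightarrow> (nat \<Rightarrow> (nat \<Rightarrow> complex) \<Rightarrow> (nat \<Rightarrow> complex) \<Rightarrow> complex) \<Rightarrow> bool" where
  "lin_indep_forms d F \<longleftrightarrow>
     (\<forall>a. (\<forall>x y. (\<Sum>i\<le>d. a i * F i x y) = 0) \<longrightarrow> (\<forall>i\<le>d. a i = 0))"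

text \<open>injdim(P^n x P^n, O(1,2)): the least dim V - 1 over subspaces V of H^0(O(1,2))
  with phi_V an injective morphism; V is given by a basis F 0, ..., F d.\<close>
definition injdim_O12 :: "nat \<Rightarrow> nat" where
  "injdim_O12 n = Inf {d. \<exists>F. (\<forall>i\<le>d. form12 n (F i)) \<and> lin_indep_forms d F \<and> inj_morphism n d F}"

definition mapP1 :: "nat \<Rightarrow> (nat \<Rightarrow> complex) \<Rightarrow> (nat \<Rightarrow> complex) \<Rightarrow> complex" where
  "mapP1 i x y = [x 0 * y 0 ^ 2,
                  x 1 * y 0 ^ 2 + 2 * x 0 * y 0 * y 1,
                  2 * x 1 * y 0 * y 1 + x 0 * y 1 ^ 2,
                  x 1 * y 1 ^ 2] ! i"

definition mapP2 :: "nat \<Rightarrow> (nat \<Rightarrow> complex) \<Rightarrow> (nat \<Rightarrow> complex) \<Rightarrow> complex" where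
  "mapP2 i x y = [x 0 * y 0 ^ 2,
                  x 1 * y 1 ^ 2,
                  x 2 * y 2 ^ 2,
                  x 0 * y 1 ^ 2 + 2 * x 1 * y 0 * y 1,
                  x 1 * y 2 ^ 2 + 2 * x 2 * y 1 * y 2,
                  x 2 * y 0 ^ 2 + 2 * x 0 * y 0 * y 2,
                  2 * x 0 * y 1 * y 2 + 2 * x 1 * y 0 * y 2 + 2 * x 2 * y 0 * y 1,
                  x 1 * y 0 ^ 2 - x 2 * y 1 ^ 2 + 2 * x 0 * y 0 * y 1 - 2 * x 1 * y 1 * y 2,
                  x 1 * y 0 ^ 2 - x 0 * y 2 ^ 2 + 2 * x 0 * y 0 * y 1 - 2 * x 2 * y 0 * y 2] ! i"

end

(* Write L = x . z and M = y . z for the linear forms with coefficient vectors x and y.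
   The cubic L M^2 determines (x, y) up to scalars: its gradient is M (M x + 2 L y), and at a
   point where M does not vanish, M x + 2 L y = 0 would give 3 L M = 0 by Euler's identity, so
   the singular locus of L M^2 is exactly the line M = 0; this recovers y, and then x.
   On binary forms this is the map P1 x P1 -> P3.  The map P2 x P2 -> P8 is the composite of
   (x, y) |-> L M^2 with the linear projection from the Klein cubic K = z0^2 z1 + z1^2 z2 + z2^2 z0:
   if L' M'^2 - c L M^2 = t K, then at a common zero p of M and M' both cubics on the left are
   singular, so t grad K(p) = 0, and t = 0 because K is smooth.
   For the lower bound, evaluating d + 1 forms of bidegree (1,2) at the 2(n + 1) points
   (e_a, e_b), b = 0, 1, gives more vectors in C^(d+1) than its dimension when d <= 2n; by
   linearity in the first factor a linear relation among them is a pair x, x' with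
   F(x, e_0) = - F(x', e_1), which contradicts injectivity or the absence of base points. *)

theory Submission
  imports Defs
begin

lemma homogeneous_system_nontrivial_solution:
  fixes a :: "'i \<Rightarrow> 'j \<Rightarrow> 'a::field"
  assumes "finite I" "finite J" "card I < card J"
  obtains v where "\<exists>j\<in>J. v j \<noteq> 0" "\<And>i. i \<in> I \<Longrightarrow> (\<Sum>j\<in>J. a i j * v j) = 0"
proof -
  have "\<exists>v. (\<exists>j\<in>J. v j \<noteq> 0) \<and> (\<forall>i\<in>I. (\<Sum>j\<in>J. a i j * v j) = 0)"
    using assms(1,2,3)
  proof (induction I arbitrary: J a rule: finite_induct)
    case empty
    then obtain j0 where "j0 \<in> J" by fastforce
    then show ?case by (intro exI[of _ "\<lambda>j. if j = j0 then 1 else 0"]) auto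
  next
    case (insert i0 I)
    show ?case
    proof (cases "\<exists>j0\<in>J. a i0 j0 \<noteq> 0")
      case False
      then show ?thesis using insert.IH[of J a] insert.prems insert.hyps by auto
    next
      case True
      then obtain j0 where j0: "j0 \<in> J" "a i0 j0 \<noteq> 0" by blast
      let ?J = "J - {j0}"
      \<comment> \<open>eliminate the unknown \<open>j0\<close> using the equation \<open>i0\<close>\<close>
      define b where "b i j = a i j - a i j0 / a i0 j0 * a i0 j" for i j
      have "finite ?J" "card I < card ?J"
        using insert.prems insert.hyps j0(1) by (auto simp: card_Diff_singleton)
      then obtain w where w: "\<exists>j\<in>?J. w j \<noteq> 0" "\<forall>i\<in>I. (\<Sum>j\<in>?J. b i j * w j) = 0"
        using insert.IH[of ?J b] by blast
      define v where "v j = (if j = j0 then - (\<Sum>j\<in>?J. a i0 j * w j) / a i0 j0 else w j)" for j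
      have v_sum: "(\<Sum>j\<in>J. c j * v j) = c j0 * v j0 + (\<Sum>j\<in>?J. c j * w j)" for c
        using insert.prems(1) j0(1) by (simp add: sum.remove v_def)
      have v_b: "(\<Sum>j\<in>J. a i j * v j) = (\<Sum>j\<in>?J. b i j * w j)" for i
      proof -
        have "(\<Sum>j\<in>J. a i j * v j) = (\<Sum>j\<in>?J. a i j * w j) - a i j0 / a i0 j0 * (\<Sum>j\<in>?J. a i0 j * w j)"
          unfolding v_sum by (simp add: v_def)
        also have "\<dots> = (\<Sum>j\<in>?J. b i j * w j)"
          by (simp add: b_def algebra_simps sum_subtractf sum_distrib_left)
        finally show ?thesis .
      qed
      have "b i0 j = 0" for j using j0(2) by (simp add: b_def)
      then have "(\<Sum>j\<in>J. a i j * v j) = 0" if "i \<in> insert i0 I" for i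
        using that w(2) by (auto simp: v_b)
      moreover have "\<exists>j\<in>J. v j \<noteq> 0" using w(1) by (auto simp: v_def)
      ultimately show ?thesis by blast
    qed
  qed
  then show ?thesis using that by blast
qed

definition std_basis :: "nat \<Rightarrow> nat \<Rightarrow> complex" where
  "std_basis a = (\<lambda>i. if i = a then 1 else 0)"

lemma std_basis_in_cvec: "a \<le> n \<Longrightarrow> std_basis a \<in> cvec n"
  unfolding cvec_def std_basis_def by (auto simp: fun_eq_iff)

lemma cvec_mono: "m \<le> n \<Longrightarrow> cvec m \<subseteq> cvec n"
  unfolding cvec_def by auto

lemma cvec_nonzero_coord: "x \<in> cvec n \<Longrightarrow> \<exists>i\<le>n. x i \<noteq> 0"
  unfolding cvec_def by (auto simp: fun_eq_iff) (meson not_le)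

lemma proj_eq_if_proportional:
  assumes "x \<in> cvec n" "x' \<in> cvec n" "k \<noteq> 0" "\<And>i. i \<le> n \<Longrightarrow> x' i = k * x i"
  shows "proj_eq x x'"
proof -
  have "x' i = k * x i" for i
    using assms unfolding cvec_def by (cases "i \<le> n") auto
  then show ?thesis unfolding proj_eq_def using \<open>k \<noteq> 0\<close> by blast
qed

lemma inj_morphism_base_point_free:
  "inj_morphism n d F \<Longrightarrow> x \<in> cvec n \<Longrightarrow> y \<in> cvec n \<Longrightarrow> \<exists>i\<le>d. F i x y \<noteq> 0"
  unfolding inj_morphism_def by blast

lemma inj_morphism_proj_eq:
  assumes "inj_morphism n d F" "x \<in> cvec n" "y \<in> cvec n" "x' \<in> cvec n" "y' \<in> cvec n" "c \<noteq> 0"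
    and "\<And>i. i \<le> d \<Longrightarrow> F i x' y' = c * F i x y"
  shows "proj_eq x x' \<and> proj_eq y y'"
  using assms unfolding inj_morphism_def by blast

text \<open>The hypothesis is also needed for \<open>c = 0\<close>: that instance transfers the absence of
  base points from \<open>F\<close> to \<open>G\<close>.\<close>

lemma inj_morphism_reduce:
  assumes F: "inj_morphism n d F" and "m \<le> n"
    and G_F: "\<And>x y x' y' c. x \<in> cvec m \<Longrightarrow> y \<in> cvec m \<Longrightarrow> x' \<in> cvec m \<Longrightarrow> y' \<in> cvec m \<Longrightarrow>
      \<forall>i\<le>e. G i x' y' = c * G i x y \<Longrightarrow> \<forall>i\<le>d. F i x' y' = c * F i x y"
  shows "inj_morphism m e G"
proof -
  have sub: "x \<in> cvec n" if "x \<in> cvec m" for x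
    using cvec_mono[OF \<open>m \<le> n\<close>] that by blast
  have "\<exists>i\<le>e. G i x y \<noteq> 0" if xy: "x \<in> cvec m" "y \<in> cvec m" for x y
  proof (rule ccontr)
    assume "\<not> (\<exists>i\<le>e. G i x y \<noteq> 0)"
    then have "\<forall>i\<le>d. F i x y = 0" using G_F[OF xy xy, of 0] by auto
    then show False using inj_morphism_base_point_free[OF F sub sub] xy by auto
  qed
  moreover have "proj_eq x x' \<and> proj_eq y y'"
    if xy: "x \<in> cvec m" "y \<in> cvec m" "x' \<in> cvec m" "y' \<in> cvec m"
      and "c \<noteq> 0" "\<forall>i\<le>e. G i x' y' = c * G i x y" for x y x' y' c
    using inj_morphism_proj_eq[OF F sub sub sub sub, of x y x' y' c] G_F[OF xy] that by blast
  ultimately show ?thesis unfolding inj_morphism_def by blast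
qed

lemma form12_monomial: "a \<le> n \<Longrightarrow> j \<le> n \<Longrightarrow> k \<le> n \<Longrightarrow> form12 n (\<lambda>x y. x a * (y j * y k))"
  unfolding form12_def
  by (rule exI[of _ "\<lambda>a' j' k'. of_bool (a' = a) * of_bool (j' = j) * of_bool (k' = k)"])
    (simp add: mult.assoc flip: sum_distrib_left)

lemma form12_add: "form12 n f \<Longrightarrow> form12 n g \<Longrightarrow> form12 n (\<lambda>x y. f x y + g x y)"
  unfolding form12_def
  by (elim exE, rule_tac x = "\<lambda>i j k. c i j k + ca i j k" in exI) (simp add: sum.distrib algebra_simps)

lemma form12_scale: "form12 n f \<Longrightarrow> form12 n (\<lambda>x y. u * f x y)"
  unfolding form12_def
  by (elim exE, rule_tac x = "\<lambda>i j k. u * c i j k" in exI) (simp add: sum_distrib_left mult.assoc)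

lemma form12_diff: "form12 n f \<Longrightarrow> form12 n g \<Longrightarrow> form12 n (\<lambda>x y. f x y - g x y)"
  using form12_add[OF _ form12_scale[of n g "-1"]] by simp

lemmas form12_intros = form12_monomial form12_add form12_diff form12_scale

lemma form12_linear_left:
  assumes "form12 n f"
  shows "f x y = (\<Sum>a\<le>n. x a * f (std_basis a) y)"
proof -
  obtain c where c: "\<And>x y. f x y = (\<Sum>i\<le>n. \<Sum>j\<le>n. \<Sum>k\<le>n. c i j k * x i * y j * y k)"
    using assms unfolding form12_def by blast
  define q where "q i = (\<Sum>j\<le>n. \<Sum>k\<le>n. c i j k * y j * y k)" for i
  have f_q: "f x y = (\<Sum>i\<le>n. x i * q i)" for x
    unfolding c q_def by (simp add: sum_distrib_left mult_ac)
  have "q a = f (std_basis a) y" if "a \<le> n" for a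
    unfolding f_q std_basis_def using that by (simp add: if_distrib[of "\<lambda>u. u * v" for v] cong: if_cong)
  then show ?thesis unfolding f_q[of x] by simp
qed

lemma form12_inj_morphism_dim_ge:
  assumes "1 \<le> n" and forms: "\<forall>i\<le>d. form12 n (F i)" and inj: "inj_morphism n d F"
  shows "2 * n + 1 \<le> d"
proof (rule ccontr)
  let ?e = std_basis
  assume "\<not> 2 * n + 1 \<le> d"
  then have "finite {..d}" "finite ({..n} \<times> {0, 1::nat})" "card {..d} < card ({..n} \<times> {0, 1::nat})"
    by (simp_all add: card_cartesian_product)
  then obtain v where v: "\<exists>ab\<in>{..n} \<times> {0, 1}. v ab \<noteq> 0"
    and system: "\<And>i. i \<in> {..d} \<Longrightarrow> (\<Sum>ab\<in>{..n} \<times> {0, 1}. F i (?e (fst ab)) (?e (snd ab)) * v ab) = 0"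
    using homogeneous_system_nontrivial_solution[where a = "\<lambda>i ab. F i (?e (fst ab)) (?e (snd ab))"]
    by blast
  define X where "X b a = (if a \<le> n then v (a, b) else 0)" for b a
  have collision: "F i (X 1) (?e 1) = (-1) * F i (X 0) (?e 0)" if "i \<le> d" for i
  proof -
    note linear = form12_linear_left[OF forms[rule_format, OF that]]
    have "F i (X 0) (?e 0) + F i (X 1) (?e 1) = (\<Sum>a\<le>n. \<Sum>b\<in>{0, 1}. F i (?e a) (?e b) * v (a, b))"
      unfolding linear[of "X 0"] linear[of "X 1"] by (simp add: X_def sum.distrib mult.commute)
    also have "\<dots> = (\<Sum>ab\<in>{..n} \<times> {0, 1}. F i (?e (fst ab)) (?e (snd ab)) * v ab)"
      by (subst sum.cartesian_product) (simp add: split_def)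
    also have "\<dots> = 0"
      using system[of i] that by simp
    finally show ?thesis by (simp add: add_eq_0_iff)
  qed
  have vanish_at_zero: "F i (\<lambda>_. 0) y = 0" if "i \<le> d" for i y
    using form12_linear_left[OF forms[rule_format, OF that], of "\<lambda>_. 0" y] by simp
  have X_cvec: "X b \<in> cvec n" if "X b \<noteq> (\<lambda>_. 0)" for b
    using that unfolding cvec_def X_def by auto
  have basis: "?e 0 \<in> cvec n" "?e 1 \<in> cvec n" using \<open>1 \<le> n\<close> by (simp_all add: std_basis_in_cvec)
  have "X 0 \<noteq> (\<lambda>_. 0) \<or> X 1 \<noteq> (\<lambda>_. 0)"
    using v by (auto simp: X_def fun_eq_iff)
  moreover have "X 1 = (\<lambda>_. 0)" if "X 0 = (\<lambda>_. 0)"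
  proof (rule ccontr)
    assume "X 1 \<noteq> (\<lambda>_. 0)"
    then obtain i where "i \<le> d" "F i (X 1) (?e 1) \<noteq> 0"
      using inj_morphism_base_point_free[OF inj X_cvec basis(2)] by blast
    then show False using collision vanish_at_zero that by simp
  qed
  moreover have "X 0 = (\<lambda>_. 0)" if "X 1 = (\<lambda>_. 0)"
  proof (rule ccontr)
    assume "X 0 \<noteq> (\<lambda>_. 0)"
    then obtain i where "i \<le> d" "F i (X 0) (?e 0) \<noteq> 0"
      using inj_morphism_base_point_free[OF inj X_cvec basis(1)] by blast
    then show False using collision vanish_at_zero that by simp
  qed
  ultimately have "X 0 \<in> cvec n" "X 1 \<in> cvec n" using X_cvec by blast+
  then have "proj_eq (?e 0) (?e 1)"
    using inj_morphism_proj_eq[OF inj _ basis(1) _ basis(2) _ collision] by simp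
  then show False unfolding proj_eq_def std_basis_def by (auto dest: fun_cong[of _ _ 1])
qed

definition dot3 :: "(nat \<Rightarrow> complex) \<Rightarrow> (nat \<Rightarrow> complex) \<Rightarrow> complex" where
  "dot3 y p = (\<Sum>j\<le>2. y j * p j)"

lemma dot3_expand: "dot3 y p = y 0 * p 0 + y 1 * p 1 + y 2 * p 2"
  by (simp add: dot3_def eval_nat_numeral atMost_Suc)

lemma dot3_common_zero:
  obtains p where "\<exists>j\<le>2. p j \<noteq> 0" "dot3 y p = 0" "dot3 y' p = 0"
proof -
  have "finite {..1::nat}" "finite {..2::nat}" "card {..1::nat} < card {..2::nat}" by auto
  then obtain p where "\<exists>j\<in>{..2::nat}. p j \<noteq> 0"
    and "\<And>i. i \<in> {..1::nat} \<Longrightarrow> (\<Sum>j\<le>2. (if i = 0 then y else y') j * p j) = 0"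
    using homogeneous_system_nontrivial_solution[where a = "\<lambda>i. if i = 0 then y else y'"] by blast
  then show ?thesis using that[of p] by (force simp: dot3_def)
qed

lemma dot3_kernel_subset_imp_proportional:
  assumes y: "\<exists>j\<le>2. y j \<noteq> 0" and ker: "\<And>p. dot3 y p = 0 \<Longrightarrow> dot3 y' p = 0"
  obtains \<mu> where "\<And>i. i \<le> 2 \<Longrightarrow> y' i = \<mu> * y i"
proof -
  obtain j where j: "j \<le> 2" "y j \<noteq> 0" using y by blast
  have "y' i * y j = y' j * y i" if "i \<le> 2" for i
  proof -
    define p where "p k = (if k = i then y j else 0) - (if k = j then y i else 0)" for k
    have p: "dot3 z p = z i * y j - z j * y i" for z
    proof -
      have "i = 0 \<or> i = 1 \<or> i = 2" "j = 0 \<or> j = 1 \<or> j = 2" using that j(1) by auto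
      then show ?thesis by (elim disjE) (simp_all add: dot3_expand p_def algebra_simps)
    qed
    then show ?thesis using ker[of p] p[of y] by simp
  qed
  then show ?thesis using j(2) by (intro that[of "y' j / y j"]) (simp add: field_simps)
qed

lemma nat_le_9_cases:
  assumes "(k::nat) \<le> 9"
  obtains "k = 0" | "k = 1" | "k = 2" | "k = 3" | "k = 4" | "k = 5" | "k = 6" | "k = 7" | "k = 8" | "k = 9"
  using assms by fastforce

text \<open>The coefficients of the ternary cubic \<open>(x \<bullet> z) (y \<bullet> z)\<^sup>2\<close> with respect to the monomials
  \<open>z\<^sub>0\<^sup>3, z\<^sub>1\<^sup>3, z\<^sub>2\<^sup>3, z\<^sub>0 z\<^sub>1\<^sup>2, z\<^sub>1 z\<^sub>2\<^sup>2, z\<^sub>2 z\<^sub>0\<^sup>2, z\<^sub>0 z\<^sub>1 z\<^sub>2, z\<^sub>0\<^sup>2 z\<^sub>1, z\<^sub>1\<^sup>2 z\<^sub>2, z\<^sub>2\<^sup>2 z\<^sub>0\<close>, in this order.\<close>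

definition lm2_coeffs :: "nat \<Rightarrow> (nat \<Rightarrow> complex) \<Rightarrow> (nat \<Rightarrow> complex) \<Rightarrow> complex" where
  "lm2_coeffs k x y = [x 0 * y 0^2, x 1 * y 1^2, x 2 * y 2^2,
     x 0 * y 1^2 + 2 * x 1 * y 0 * y 1, x 1 * y 2^2 + 2 * x 2 * y 1 * y 2,
     x 2 * y 0^2 + 2 * x 0 * y 0 * y 2, 2 * x 0 * y 1 * y 2 + 2 * x 1 * y 0 * y 2 + 2 * x 2 * y 0 * y 1,
     x 1 * y 0^2 + 2 * x 0 * y 0 * y 1, x 2 * y 1^2 + 2 * x 1 * y 1 * y 2,
     x 0 * y 2^2 + 2 * x 2 * y 0 * y 2] ! k"

definition cubic_grad :: "(nat \<Rightarrow> complex) \<Rightarrow> (nat \<Rightarrow> complex) \<Rightarrow> nat \<Rightarrow> complex" where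
  "cubic_grad a p j = [
     3 * a 0 * p 0^2 + a 3 * p 1^2 + 2 * a 5 * p 0 * p 2 + a 6 * p 1 * p 2 + 2 * a 7 * p 0 * p 1 + a 9 * p 2^2,
     3 * a 1 * p 1^2 + 2 * a 3 * p 0 * p 1 + a 4 * p 2^2 + a 6 * p 0 * p 2 + a 7 * p 0^2 + 2 * a 8 * p 1 * p 2,
     3 * a 2 * p 2^2 + 2 * a 4 * p 1 * p 2 + a 5 * p 0^2 + a 6 * p 0 * p 1 + a 8 * p 1^2 + 2 * a 9 * p 0 * p 2
   ] ! j"

text \<open>The Klein cubic \<open>z\<^sub>0\<^sup>2 z\<^sub>1 + z\<^sub>1\<^sup>2 z\<^sub>2 + z\<^sub>2\<^sup>2 z\<^sub>0\<close>.\<close>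

definition klein_cubic :: "nat \<Rightarrow> complex" where
  "klein_cubic k = (if k \<in> {7, 8, 9} then 1 else 0)"

lemma cubic_grad_linear:
  assumes "\<And>k. k \<le> 9 \<Longrightarrow> a k = u * b k + v * b' k" and "j \<le> 2"
  shows "cubic_grad a p j = u * cubic_grad b p j + v * cubic_grad b' p j"
proof -
  have "j = 0 \<or> j = 1 \<or> j = 2" using \<open>j \<le> 2\<close> by auto
  then show ?thesis
    using assms(1)[of 0] assms(1)[of 1] assms(1)[of 2] assms(1)[of 3] assms(1)[of 4]
      assms(1)[of 5] assms(1)[of 6] assms(1)[of 7] assms(1)[of 8] assms(1)[of 9]
    by (elim disjE) (simp_all add: cubic_grad_def algebra_simps)
qed

lemma cubic_grad_lm2_coeffs:
  assumes "j \<le> 2"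
  shows "cubic_grad (\<lambda>k. lm2_coeffs k x y) p j = dot3 y p * (dot3 y p * x j + 2 * dot3 x p * y j)"
proof -
  have "\<forall>j\<in>{0, 1, 2}. cubic_grad (\<lambda>k. lm2_coeffs k x y) p j = dot3 y p * (dot3 y p * x j + 2 * dot3 x p * y j)"
    by (simp add: cubic_grad_def lm2_coeffs_def dot3_expand) (intro conjI; algebra)
  then show ?thesis using assms by (auto simp: le_Suc_eq numeral_2_eq_2)
qed

lemma klein_cubic_nonsingular:
  assumes "\<And>j. j \<le> 2 \<Longrightarrow> cubic_grad klein_cubic p j = 0"
  shows "p 0 = 0 \<and> p 1 = 0 \<and> p 2 = 0"
proof -
  have E0: "2 * p 0 * p 1 + p 2^2 = 0" using assms[of 0] by (simp add: cubic_grad_def klein_cubic_def)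
  have E1: "p 0^2 + 2 * p 1 * p 2 = 0" using assms[of 1] by (simp add: cubic_grad_def klein_cubic_def)
  have E2: "p 1^2 + 2 * p 0 * p 2 = 0" using assms[of 2] by (simp add: cubic_grad_def klein_cubic_def)
  have "9 * p 0^4 = 0" "9 * p 1^4 = 0" "9 * p 2^4 = 0" using E0 E1 E2 by algebra+
  then show ?thesis by simp
qed

lemma lm2_coeffs_eq_zero:
  assumes y: "\<exists>j\<le>2. y j \<noteq> 0" and zero: "\<And>k. k \<le> 9 \<Longrightarrow> lm2_coeffs k x y = 0"
  shows "\<forall>i\<le>2. x i = 0"
proof -
  have "x 0 * y 0^2 = 0" "x 1 * y 1^2 = 0" "x 2 * y 2^2 = 0"
     "x 0 * y 1^2 + 2 * x 1 * y 0 * y 1 = 0" "x 1 * y 2^2 + 2 * x 2 * y 1 * y 2 = 0"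
     "x 2 * y 0^2 + 2 * x 0 * y 0 * y 2 = 0" "x 1 * y 0^2 + 2 * x 0 * y 0 * y 1 = 0"
     "x 2 * y 1^2 + 2 * x 1 * y 1 * y 2 = 0" "x 0 * y 2^2 + 2 * x 2 * y 0 * y 2 = 0"
    using zero[of 0] zero[of 1] zero[of 2] zero[of 3] zero[of 4] zero[of 5]
      zero[of 7] zero[of 8] zero[of 9] by (simp_all add: lm2_coeffs_def)
  moreover have "y 0 \<noteq> 0 \<or> y 1 \<noteq> 0 \<or> y 2 \<noteq> 0" using y by (auto simp: le_Suc_eq numeral_2_eq_2)
  ultimately show ?thesis by (auto simp: le_Suc_eq numeral_2_eq_2)
qed

lemma lm2_singular_point_on_line:
  assumes x: "\<exists>j\<le>2. x j \<noteq> 0"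
    and singular: "\<And>j. j \<le> 2 \<Longrightarrow> cubic_grad (\<lambda>k. lm2_coeffs k x y) p j = 0"
  shows "dot3 y p = 0"
proof (rule ccontr)
  assume m: "dot3 y p \<noteq> 0"
  have e: "dot3 y p * x j + 2 * dot3 x p * y j = 0" if "j \<le> 2" for j
    using singular[OF that] m by (simp add: cubic_grad_lm2_coeffs[OF that])
  \<comment> \<open>Euler's identity for the gradient of \<open>L M\<^sup>2\<close>\<close>
  have "3 * dot3 x p * dot3 y p = p 0 * (dot3 y p * x 0 + 2 * dot3 x p * y 0)
      + p 1 * (dot3 y p * x 1 + 2 * dot3 x p * y 1) + p 2 * (dot3 y p * x 2 + 2 * dot3 x p * y 2)"
    unfolding dot3_expand by algebra
  then have "dot3 x p = 0" using e[of 0] e[of 1] e[of 2] m by simp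
  then show False using e m x by auto
qed

lemma lm2_coeffs_scale_right:
  assumes "\<And>i. i \<le> 2 \<Longrightarrow> y' i = \<mu> * y i" and "k \<le> 9"
  shows "lm2_coeffs k x y' = \<mu>^2 * lm2_coeffs k x y"
  using assms(2) by (cases rule: nat_le_9_cases)
    (simp_all add: lm2_coeffs_def assms(1) algebra_simps power2_eq_square)

lemma lm2_coeffs_diff_left:
  assumes "k \<le> 9"
  shows "lm2_coeffs k (\<lambda>i. x' i - \<kappa> * x i) y = lm2_coeffs k x' y - \<kappa> * lm2_coeffs k x y"
  using assms by (cases rule: nat_le_9_cases) (simp_all add: lm2_coeffs_def algebra_simps)

lemma lm2_coeffs_proportional_imp_proj_eq:
  assumes xy: "x \<in> cvec 2" "y \<in> cvec 2" "x' \<in> cvec 2" "y' \<in> cvec 2" and "c \<noteq> 0"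
    and coeffs: "\<And>k. k \<le> 9 \<Longrightarrow> lm2_coeffs k x' y' = c * lm2_coeffs k x y"
  shows "proj_eq x x' \<and> proj_eq y y'"
proof -
  have "dot3 y' p = 0" if "dot3 y p = 0" for p
  proof (rule lm2_singular_point_on_line)
    show "\<exists>j\<le>2. x' j \<noteq> 0" using cvec_nonzero_coord[OF xy(3)] .
    fix j :: nat assume "j \<le> 2"
    have "cubic_grad (\<lambda>k. lm2_coeffs k x' y') p j
        = c * cubic_grad (\<lambda>k. lm2_coeffs k x y) p j + 0 * cubic_grad (\<lambda>k. lm2_coeffs k x y) p j"
      using coeffs \<open>j \<le> 2\<close> by (intro cubic_grad_linear) auto
    then show "cubic_grad (\<lambda>k. lm2_coeffs k x' y') p j = 0"
      using cubic_grad_lm2_coeffs[OF \<open>j \<le> 2\<close>] that by simp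
  qed
  then obtain \<mu> where \<mu>: "\<And>i. i \<le> 2 \<Longrightarrow> y' i = \<mu> * y i"
    using dot3_kernel_subset_imp_proportional[OF cvec_nonzero_coord[OF xy(2)]] by blast
  have "\<mu> \<noteq> 0" using cvec_nonzero_coord[OF xy(4)] \<mu> by auto
  define \<kappa> where "\<kappa> = c / \<mu>^2"
  have "lm2_coeffs k (\<lambda>i. x' i - \<kappa> * x i) y = 0" if "k \<le> 9" for k
  proof -
    have "\<mu>^2 * lm2_coeffs k x' y = c * lm2_coeffs k x y"
      using coeffs[OF that] lm2_coeffs_scale_right[OF \<mu> that] by simp
    then show ?thesis
      unfolding lm2_coeffs_diff_left[OF that] \<kappa>_def using \<open>\<mu> \<noteq> 0\<close> by (simp add: field_simps)
  qed
  then have "\<forall>i\<le>2. x' i - \<kappa> * x i = 0"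
    using lm2_coeffs_eq_zero[OF cvec_nonzero_coord[OF xy(2)]] by blast
  moreover have "\<kappa> \<noteq> 0" using \<open>c \<noteq> 0\<close> \<open>\<mu> \<noteq> 0\<close> by (simp add: \<kappa>_def)
  ultimately show ?thesis
    using \<mu> \<open>\<mu> \<noteq> 0\<close> xy by (auto intro: proj_eq_if_proportional)
qed

lemma inj_morphism_lm2_coeffs: "inj_morphism 2 9 lm2_coeffs"
proof -
  have "\<exists>k\<le>9. lm2_coeffs k x y \<noteq> 0" if "x \<in> cvec 2" "y \<in> cvec 2" for x y
    using that lm2_coeffs_eq_zero cvec_nonzero_coord by blast
  then show ?thesis
    unfolding inj_morphism_def using lm2_coeffs_proportional_imp_proj_eq by blast
qed

lemma mapP2_eq_lm2_coeffs:
  shows "i \<le> 6 \<Longrightarrow> mapP2 i x y = lm2_coeffs i x y"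
    and "mapP2 7 x y = lm2_coeffs 7 x y - lm2_coeffs 8 x y"
    and "mapP2 8 x y = lm2_coeffs 7 x y - lm2_coeffs 9 x y"
proof -
  assume "i \<le> 6"
  then have "i \<le> 9" "i \<le> 6" by simp_all
  then show "mapP2 i x y = lm2_coeffs i x y"
    by (cases rule: nat_le_9_cases) (simp_all add: mapP2_def lm2_coeffs_def)
qed (simp_all add: mapP2_def lm2_coeffs_def algebra_simps)

lemma mapP2_proportional_imp_lm2_proportional:
  assumes "y \<in> cvec 2" "y' \<in> cvec 2" and coeffs: "\<forall>i\<le>8. mapP2 i x' y' = c * mapP2 i x y"
  shows "\<forall>k\<le>9. lm2_coeffs k x' y' = c * lm2_coeffs k x y"
proof -
  define t where "t = lm2_coeffs 7 x' y' - c * lm2_coeffs 7 x y"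
  have low: "lm2_coeffs k x' y' = c * lm2_coeffs k x y" if "k \<le> 6" for k
    using coeffs[rule_format, of k] that by (simp add: mapP2_eq_lm2_coeffs(1))
  have "mapP2 7 x' y' = c * mapP2 7 x y" "mapP2 8 x' y' = c * mapP2 8 x y"
    using coeffs by simp_all
  then have high: "lm2_coeffs 8 x' y' = c * lm2_coeffs 8 x y + t" "lm2_coeffs 9 x' y' = c * lm2_coeffs 9 x y + t"
    unfolding t_def mapP2_eq_lm2_coeffs(2,3) by algebra+
  have diff: "lm2_coeffs k x' y' = c * lm2_coeffs k x y + t * klein_cubic k" if "k \<le> 9" for k
    using that by (cases rule: nat_le_9_cases) (simp_all add: low high klein_cubic_def t_def)
  obtain p where p: "\<exists>j\<le>2. p j \<noteq> 0" "dot3 y p = 0" "dot3 y' p = 0"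
    using dot3_common_zero .
  have "t * cubic_grad klein_cubic p j = 0" if "j \<le> 2" for j
  proof -
    have "cubic_grad (\<lambda>k. lm2_coeffs k x' y') p j
        = c * cubic_grad (\<lambda>k. lm2_coeffs k x y) p j + t * cubic_grad klein_cubic p j"
      using diff that by (rule cubic_grad_linear)
    then show ?thesis using p(2,3) by (simp add: cubic_grad_lm2_coeffs[OF that])
  qed
  then have "t = 0"
    using klein_cubic_nonsingular[of p] p(1) by (auto simp: le_Suc_eq numeral_2_eq_2)
  then show ?thesis using diff by simp
qed

lemma inj_morphism_mapP2: "inj_morphism 2 8 mapP2"
proof (rule inj_morphism_reduce[OF inj_morphism_lm2_coeffs order_refl])
  fix x y x' y' :: "nat \<Rightarrow> complex" and c
  assume "x \<in> cvec 2" "y \<in> cvec 2" "x' \<in> cvec 2" "y' \<in> cvec 2"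
    and "\<forall>i\<le>8. mapP2 i x' y' = c * mapP2 i x y"
  then show "\<forall>k\<le>9. lm2_coeffs k x' y' = c * lm2_coeffs k x y"
    by (intro mapP2_proportional_imp_lm2_proportional)
qed

text \<open>When \<open>x 2 = y 2 = 0\<close>, the coordinates of \<open>mapP1\<close> are the coefficients number 0, 7, 3, 1
  of \<open>lm2_coeffs\<close> and the other six coefficients vanish.\<close>

lemma mapP1_proportional_imp_lm2_proportional:
  assumes "x 2 = 0" "y 2 = 0" "x' 2 = 0" "y' 2 = 0" and coeffs: "\<forall>i\<le>3. mapP1 i x' y' = c * mapP1 i x y"
  shows "\<forall>k\<le>9. lm2_coeffs k x' y' = c * lm2_coeffs k x y"
proof -
  have "mapP1 i x' y' = c * mapP1 i x y" if "i \<le> 3" for i using coeffs that by blast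
  from this[of 0] this[of 1] this[of 2] this[of 3] show ?thesis
    using assms(1-4) by (auto elim: nat_le_9_cases simp: lm2_coeffs_def mapP1_def algebra_simps)
qed

lemma inj_morphism_mapP1: "inj_morphism 1 3 mapP1"
proof (rule inj_morphism_reduce[OF inj_morphism_lm2_coeffs])
  fix x y x' y' :: "nat \<Rightarrow> complex" and c
  assume "x \<in> cvec 1" "y \<in> cvec 1" "x' \<in> cvec 1" "y' \<in> cvec 1"
    and "\<forall>i\<le>3. mapP1 i x' y' = c * mapP1 i x y"
  then show "\<forall>k\<le>9. lm2_coeffs k x' y' = c * lm2_coeffs k x y"
    by (intro mapP1_proportional_imp_lm2_proportional) (simp_all add: cvec_def)
qed simp

lemma form12_mapP1: "i \<le> 3 \<Longrightarrow> form12 1 (mapP1 i)"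
  by (auto simp: le_Suc_eq numeral_eq_Suc mapP1_def[abs_def] power2_eq_square mult.assoc
      intro!: form12_intros)

lemma form12_mapP2: "i \<le> 8 \<Longrightarrow> form12 2 (mapP2 i)"
  by (auto simp: le_Suc_eq numeral_eq_Suc mapP2_def[abs_def] power2_eq_square mult.assoc
      intro!: form12_intros)

lemma lin_indep_mapP1: "lin_indep_forms 3 mapP1"
  unfolding lin_indep_forms_def
proof (rule allI, rule impI)
  fix a :: "nat \<Rightarrow> complex" assume vanish: "\<forall>x y. (\<Sum>i\<le>3. a i * mapP1 i x y) = 0"
  let ?e = std_basis
  have "a 0 = 0" "a 1 = 0" "a 2 = 0" "a 3 = 0"
    using vanish[rule_format, of "?e 0" "?e 0"] vanish[rule_format, of "?e 1" "?e 0"]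
      vanish[rule_format, of "?e 0" "?e 1"] vanish[rule_format, of "?e 1" "?e 1"]
    by (simp_all add: eval_nat_numeral atMost_Suc mapP1_def std_basis_def)
  then show "\<forall>i\<le>3. a i = 0" by (auto simp: le_Suc_eq numeral_eq_Suc)
qed

lemma lin_indep_mapP2: "lin_indep_forms 8 mapP2"
  unfolding lin_indep_forms_def
proof (rule allI, rule impI)
  fix a :: "nat \<Rightarrow> complex" assume vanish: "\<forall>x y. (\<Sum>i\<le>8. a i * mapP2 i x y) = 0"
  let ?e = std_basis
  have "a 0 = 0" "a 1 = 0" "a 2 = 0" "a 3 = 0" "a 4 = 0" "a 5 = 0" "a 7 = 0"
    using vanish[rule_format, of "?e 0" "?e 0"] vanish[rule_format, of "?e 1" "?e 1"]
      vanish[rule_format, of "?e 2" "?e 2"] vanish[rule_format, of "?e 0" "?e 1"]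
      vanish[rule_format, of "?e 1" "?e 2"] vanish[rule_format, of "?e 2" "?e 0"]
      vanish[rule_format, of "?e 2" "?e 1"]
    by (simp_all add: eval_nat_numeral atMost_Suc mapP2_def std_basis_def)
  moreover from this have "a 8 = 0"
    using vanish[rule_format, of "?e 1" "?e 0"] by (simp add: eval_nat_numeral atMost_Suc mapP2_def std_basis_def)
  moreover from calculation have "a 6 = 0"
    using vanish[rule_format, of "?e 0" "\<lambda>i. ?e 1 i + ?e 2 i"]
    by (simp add: eval_nat_numeral atMost_Suc mapP2_def std_basis_def)
  ultimately show "\<forall>i\<le>8. a i = 0" by (auto simp: le_Suc_eq numeral_eq_Suc)
qed

theorem proposition4p2:
  shows "inj_morphism 1 3 mapP1 \<and> inj_morphism 2 8 mapP2 \<and>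
         injdim_O12 1 = 3 \<and> injdim_O12 2 \<le> 8"
proof (intro conjI)
  show "inj_morphism 1 3 mapP1" by (rule inj_morphism_mapP1)
  show "inj_morphism 2 8 mapP2" by (rule inj_morphism_mapP2)
  show "injdim_O12 1 = 3" unfolding injdim_O12_def
  proof (rule cInf_eq_minimum)
    show "3 \<in> {d. \<exists>F. (\<forall>i\<le>d. form12 1 (F i)) \<and> lin_indep_forms d F \<and> inj_morphism 1 d F}"
      using form12_mapP1 lin_indep_mapP1 inj_morphism_mapP1 by blast
  next
    fix d assume "d \<in> {d. \<exists>F. (\<forall>i\<le>d. form12 1 (F i)) \<and> lin_indep_forms d F \<and> inj_morphism 1 d F}"
    then show "3 \<le> d" using form12_inj_morphism_dim_ge[of 1 d] by auto
  qed
  show "injdim_O12 2 \<le> 8" unfolding injdim_O12_def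
    by (rule cInf_lower) (use form12_mapP2 lin_indep_mapP2 inj_morphism_mapP2 in auto)
qed

end
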